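(* Let $\sigma=\tanh$, $d\in\mathbb N$, $w_1,\dots,w_m\in\mathbb R^d$ and $a_1,\dots,a_m\in\mathbb R$. Then $$\dim\operatorname{span}\{\sigma(w_i^\top x),\ a_i\sigma'(w_i^\top x)x_1,\ \dots,\ a_i\sigma'(w_i^\top x)x_d\}_{i=1}^m=m_w+m_a d,$$ where $m_w=\frac12\left|\{w_i,-w_i: w_i\neq0,\ i\in[m]\}\right|$ and $m_a=\frac12\left|\{w_i,-w_i: w_i\neq0,\ a_i\neq0,\ i\in[m]\}\right|+\left|\{w_i: w_i=0,\ a_i\neq0,\ i\in[m]\}\right|$ ($|\cdot|$ denotes the number of distinct elements of a set). Equivalently, this is the model rank of $f_\theta(x)=\sum_{i=1}^m a_i\tanh(w_i^\top x)$ at $\theta=(a_i,w_i)_{i=1}^m$.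
   Context: The span is taken in the vector space of real functions of $x\in\mathbb R^d$; $x_t$ is the $t$-th coordinate of $x$. The model rank of a model $f_\theta$ at $\theta$ is $\dim\operatorname{span}\{\partial_{\theta_i}f(\cdot;\theta)\}_i$. *)

theory Defs
  imports "HOL-Analysis.Analysis" "HOL-Library.Function_Algebras"
begin

definition fscale :: "real \<Rightarrow> ('a \<Rightarrow> real) \<Rightarrow> ('a \<Rightarrow> real)" where
  "fscale c f = (\<lambda>x. c * f x)"

abbreviation fun_span :: "('a \<Rightarrow> real) set \<Rightarrow> ('a \<Rightarrow> real) set" where
  "fun_span S \<equiv> Modules.module.span fscale S"

abbreviation fun_dim :: "('a \<Rightarrow> real) set \<Rightarrow> nat" where
  "fun_dim S \<equiv> Vector_Spaces.vector_space.dim fscale S"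

lemma vector_space_fscale: "Vector_Spaces.vector_space (fscale :: real \<Rightarrow> ('a \<Rightarrow> real) \<Rightarrow> _)"
  by unfold_locales (auto simp: fscale_def algebra_simps fun_eq_iff)

end

theory Submission
  imports Defs "HOL-Real_Asymp.Real_Asymp"
begin

text \<open>
  Since \<open>tanh\<close> is odd and \<open>tanh'\<close> is even, the generators depend on each \<open>w\<^sub>i\<close> only up to
  sign, and for \<open>w\<^sub>i = 0\<close> the derivative generators are the coordinate functions \<open>x\<^sub>t\<close>. Pick a
  direction \<open>v\<close> on which \<open>0\<close> and the vectors \<open>\<plusminus>w\<^sub>i\<close> have pairwise distinct projections. The
  span is then spanned by \<open>tanh (u \<bullet> x)\<close> and \<open>tanh' (u \<bullet> x) x\<^sub>t\<close>, for one representative \<open>u\<close> of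
  each pair \<open>\<plusminus>w\<^sub>i\<close> with \<open>u \<bullet> v > 0\<close>, together with the \<open>x\<^sub>t\<close> if some \<open>w\<^sub>i = 0\<close> has \<open>a\<^sub>i \<noteq> 0\<close>,
  and these functions are linearly independent, which gives the count.

  For independence, restrict a vanishing combination to the lines \<open>r \<mapsto> r v + y\<close>. This gives
  \<open>C\<^sub>0 + C\<^sub>1 r + \<Sum>\<^sub>k \<alpha>\<^sub>k tanh (c\<^sub>k r + e\<^sub>k) + (\<beta>\<^sub>k r + \<phi>\<^sub>k) tanh' (c\<^sub>k r + e\<^sub>k) = 0\<close> with distinct
  slopes \<open>c\<^sub>k > 0\<close>. For \<open>r \<rightarrow> \<infinity>\<close>, after multiplying by \<open>e\<^sup>2\<^sup>\<mu>\<^sup>r\<close> for the least slope \<open>\<mu>\<close>, only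
  that term survives and forces \<open>\<beta> = 0\<close>, \<open>\<alpha> = 2\<phi>\<close>; the same at \<open>r \<rightarrow> -\<infinity>\<close> gives \<open>\<alpha> = -2\<phi>\<close>.
  So the term of least slope vanishes, and induction on the number of slopes finishes.
\<close>

definition dtanh :: "real \<Rightarrow> real" where
  "dtanh z = 1 - tanh z ^ 2"

lemma deriv_tanh_eq_dtanh: "deriv tanh z = dtanh z"
  unfolding dtanh_def by (rule DERIV_imp_deriv) (auto intro!: derivative_eq_intros)

lemma dtanh_minus [simp]: "dtanh (- z) = dtanh z"
  by (simp add: dtanh_def)

lemma dtanh_0 [simp]: "dtanh 0 = 1"
  by (simp add: dtanh_def)

lemma tanh_affine_tendsto:
  fixes c e :: real
  assumes "0 < c"
  shows "((\<lambda>x. tanh (c * x + e)) \<longlongrightarrow> 1) at_top"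
  using assms unfolding tanh_real_altdef by real_asymp

lemma exp_tanh_affine_minus_1_tendsto:
  fixes c e :: real
  assumes "0 < c"
  shows "((\<lambda>x. exp (2 * c * x) * (tanh (c * x + e) - 1)) \<longlongrightarrow> - 2 * exp (- 2 * e)) at_top"
  using assms unfolding tanh_real_altdef by real_asymp

lemma exp_dtanh_affine_tendsto:
  fixes c e :: real
  assumes "0 < c"
  shows "((\<lambda>x. exp (2 * c * x) * dtanh (c * x + e)) \<longlongrightarrow> 4 * exp (- 2 * e)) at_top"
  using assms unfolding dtanh_def tanh_real_altdef by real_asymp

lemma tanh_affine_decay_below_rate:
  fixes c e u :: real
  assumes "0 < c" "u < c"
  shows "((\<lambda>x. exp (2 * u * x) * (tanh (c * x + e) - 1)) \<longlongrightarrow> 0) at_top"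
    and "((\<lambda>x. exp (2 * u * x) * dtanh (c * x + e)) \<longlongrightarrow> 0) at_top"
    and "((\<lambda>x. x * exp (2 * u * x) * dtanh (c * x + e)) \<longlongrightarrow> 0) at_top"
proof -
  have rescale: "exp (2 * u * x) * y = exp (- (2 * (c - u) * x)) * (exp (2 * c * x) * y)"
    and rescale': "x * exp (2 * u * x) * y = x * exp (- (2 * (c - u) * x)) * (exp (2 * c * x) * y)"
    for x y :: real
  proof -
    have "exp (2 * u * x) = exp (- (2 * (c - u) * x)) * exp (2 * c * x)"
      by (simp add: mult_exp_exp algebra_simps)
    then show "exp (2 * u * x) * y = exp (- (2 * (c - u) * x)) * (exp (2 * c * x) * y)"
      and "x * exp (2 * u * x) * y = x * exp (- (2 * (c - u) * x)) * (exp (2 * c * x) * y)"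
      by (simp_all only: mult.assoc)
  qed
  have decay: "((\<lambda>x. exp (- (2 * (c - u) * x))) \<longlongrightarrow> 0) at_top"
    "((\<lambda>x. x * exp (- (2 * (c - u) * x))) \<longlongrightarrow> 0) at_top"
    using assms by real_asymp+
  show "((\<lambda>x. exp (2 * u * x) * (tanh (c * x + e) - 1)) \<longlongrightarrow> 0) at_top"
    using tendsto_mult[OF decay(1) exp_tanh_affine_minus_1_tendsto[OF assms(1)]]
    unfolding rescale rescale' mult_zero_left .
  show "((\<lambda>x. exp (2 * u * x) * dtanh (c * x + e)) \<longlongrightarrow> 0) at_top"
    using tendsto_mult[OF decay(1) exp_dtanh_affine_tendsto[OF assms(1)]]
    unfolding rescale rescale' mult_zero_left .
  show "((\<lambda>x. x * exp (2 * u * x) * dtanh (c * x + e)) \<longlongrightarrow> 0) at_top"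
    using tendsto_mult[OF decay(2) exp_dtanh_affine_tendsto[OF assms(1)]]
    unfolding rescale rescale' mult_zero_left .
qed

lemma exp_tanh_term_tendsto_0:
  fixes c e u al b f :: real
  assumes "0 < c" "u < c"
  shows "((\<lambda>x. exp (2 * u * x) * (al * (tanh (c * x + e) - 1) + (b * x + f) * dtanh (c * x + e)))
    \<longlongrightarrow> 0) at_top"
proof -
  have "((\<lambda>x. al * (exp (2 * u * x) * (tanh (c * x + e) - 1))
      + b * (x * exp (2 * u * x) * dtanh (c * x + e))
      + f * (exp (2 * u * x) * dtanh (c * x + e))) \<longlongrightarrow> al * 0 + b * 0 + f * 0) at_top"
    using assms by (intro tendsto_intros tanh_affine_decay_below_rate)
  then show ?thesis
    by (simp add: algebra_simps)
qed

lemma linear_plus_convergent_eventually_0: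
  fixes p g :: "real \<Rightarrow> real"
  assumes p: "(p \<longlongrightarrow> P) at_top" "P \<noteq> 0" and g: "(g \<longlongrightarrow> L) at_top"
    and eq: "eventually (\<lambda>x. \<beta> * x * p x + g x = 0) at_top"
  shows "\<beta> = 0 \<and> L = 0"
proof -
  have "((\<lambda>x. g x * inverse x) \<longlongrightarrow> L * 0) at_top"
    by (intro tendsto_mult g tendsto_inverse_0_at_top filterlim_ident)
  moreover have "eventually (\<lambda>x. g x * inverse x = - (\<beta> * p x)) at_top"
    using eq eventually_gt_at_top[of 0] by eventually_elim (auto simp: field_simps)
  ultimately have "((\<lambda>x. - (\<beta> * p x)) \<longlongrightarrow> 0) at_top"
    by (auto intro: Lim_transform_eventually)
  moreover have "((\<lambda>x. - (\<beta> * p x)) \<longlongrightarrow> - (\<beta> * P)) at_top"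
    by (intro tendsto_intros p)
  ultimately have "\<beta> = 0"
    using tendsto_unique[OF trivial_limit_at_top_linorder] p(2) by fastforce
  with eq have "(g \<longlongrightarrow> 0) at_top"
    by (simp add: tendsto_eventually)
  with g have "L = 0"
    using tendsto_unique[OF trivial_limit_at_top_linorder] by blast
  with \<open>\<beta> = 0\<close> show ?thesis ..
qed

lemma tanh_sum_vanishing_affine_part:
  fixes K :: "'k set" and c e al b f :: "'k \<Rightarrow> real"
  assumes pos: "\<forall>k\<in>K. 0 < c k"
    and h: "\<forall>x. C0 + C1 * x + (\<Sum>k\<in>K. al k * tanh (c k * x + e k) + (b k * x + f k) * dtanh (c k * x + e k)) = 0"
  shows "C1 = 0 \<and> C0 + sum al K = 0"
proof (rule linear_plus_convergent_eventually_0)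
  define g where "g x = C0 + (\<Sum>k\<in>K. al k * tanh (c k * x + e k) + b k * (x * dtanh (c k * x + e k))
    + f k * dtanh (c k * x + e k))" for x
  show "((\<lambda>_::real. 1::real) \<longlongrightarrow> 1) at_top" "(1::real) \<noteq> 0"
    by simp_all
  have "((\<lambda>x. x * dtanh (c k * x + e k)) \<longlongrightarrow> 0) at_top"
    and "((\<lambda>x. dtanh (c k * x + e k)) \<longlongrightarrow> 0) at_top" if "k \<in> K" for k
    using tanh_affine_decay_below_rate(2,3)[of "c k" 0 "e k"] pos that by simp_all
  then have "(g \<longlongrightarrow> C0 + (\<Sum>k\<in>K. al k * 1 + b k * 0 + f k * 0)) at_top"
    unfolding g_def using pos by (intro tendsto_intros tanh_affine_tendsto) auto
  then show "(g \<longlongrightarrow> C0 + sum al K) at_top"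
    by simp
  show "eventually (\<lambda>x. C1 * x * 1 + g x = 0) at_top"
    using h by (simp add: g_def algebra_simps)
qed

lemma tanh_sum_vanishing_least_slope:
  fixes K :: "'k set" and c e al b f :: "'k \<Rightarrow> real"
  assumes fin: "finite K" and pos: "\<forall>k\<in>K. 0 < c k" and inj: "inj_on c K"
    and k0: "k0 \<in> K" "\<forall>k\<in>K. c k0 \<le> c k"
    and h: "\<forall>x. C0 + C1 * x + (\<Sum>k\<in>K. al k * tanh (c k * x + e k) + (b k * x + f k) * dtanh (c k * x + e k)) = 0"
  shows "b k0 = 0 \<and> al k0 = 2 * f k0"
proof -
  define \<mu> where "\<mu> = c k0"
  define R where "R k x = al k * (tanh (c k * x + e k) - 1) + (b k * x + f k) * dtanh (c k * x + e k)" for k x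
  have "C1 = 0" "C0 = - sum al K"
    using tanh_sum_vanishing_affine_part[OF pos h] by auto
  then have sum_R: "(\<Sum>k\<in>K. R k x) = 0" for x
    using h by (simp add: R_def algebra_simps sum.distrib sum_subtractf)
  have "\<mu> < c k" if "k \<in> K - {k0}" for k
    using that k0 inj_onD[OF inj, of k k0] unfolding \<mu>_def by force
  then have rest: "((\<lambda>x. \<Sum>k\<in>K - {k0}. exp (2 * \<mu> * x) * R k x) \<longlongrightarrow> 0) at_top"
    unfolding R_def using pos by (intro tendsto_null_sum exp_tanh_term_tendsto_0) auto
  \<comment> \<open>after multiplying by \<open>exp (2 * \<mu> * x)\<close> only the term \<open>k0\<close> survives, with a linear part\<close>
  define p where "p x = exp (2 * \<mu> * x) * dtanh (\<mu> * x + e k0)" for x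
  define g where "g x = al k0 * (exp (2 * \<mu> * x) * (tanh (\<mu> * x + e k0) - 1)) + f k0 * p x
    + (\<Sum>k\<in>K - {k0}. exp (2 * \<mu> * x) * R k x)" for x
  have "b k0 = 0 \<and> al k0 * (- 2 * exp (- 2 * e k0)) + f k0 * (4 * exp (- 2 * e k0)) + 0 = 0"
  proof (rule linear_plus_convergent_eventually_0)
    show p: "(p \<longlongrightarrow> 4 * exp (- 2 * e k0)) at_top"
      unfolding p_def \<mu>_def using pos k0 by (intro exp_dtanh_affine_tendsto) auto
    show "4 * exp (- 2 * e k0) \<noteq> 0"
      by simp
    show "(g \<longlongrightarrow> al k0 * (- 2 * exp (- 2 * e k0)) + f k0 * (4 * exp (- 2 * e k0)) + 0) at_top"
      unfolding g_def \<mu>_def using pos k0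
      by (intro tendsto_intros exp_tanh_affine_minus_1_tendsto p[unfolded \<mu>_def] rest[unfolded \<mu>_def]) auto
    have "b k0 * x * p x + g x = exp (2 * \<mu> * x) * (\<Sum>k\<in>K. R k x)" for x
      by (simp add: sum.remove[OF fin k0(1)] R_def p_def g_def \<mu>_def algebra_simps sum_distrib_left)
    then show "eventually (\<lambda>x. b k0 * x * p x + g x = 0) at_top"
      by (simp add: sum_R)
  qed
  then show ?thesis
    by (simp add: algebra_simps)
qed

lemma tanh_sum_reflect:
  fixes K :: "'k set" and c e al b f :: "'k \<Rightarrow> real"
  assumes "\<forall>x. C0 + C1 * x + (\<Sum>k\<in>K. al k * tanh (c k * x + e k) + (b k * x + f k) * dtanh (c k * x + e k)) = 0"
  shows "\<forall>x. C0 + (- C1) * x + (\<Sum>k\<in>K. (- al k) * tanh (c k * x + (- e k))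
    + ((- b k) * x + f k) * dtanh (c k * x + (- e k))) = 0"
proof
  fix x
  have "c k * (- x) + e k = - (c k * x + - e k)" for k
    by simp
  then show "C0 + (- C1) * x + (\<Sum>k\<in>K. (- al k) * tanh (c k * x + (- e k))
      + ((- b k) * x + f k) * dtanh (c k * x + (- e k))) = 0"
    using assms[rule_format, of "- x"] by (simp only: tanh_minus dtanh_minus) simp
qed

lemma tanh_sum_vanishing:
  fixes K :: "'k set" and c e al b f :: "'k \<Rightarrow> real"
  assumes "finite K" and "\<forall>k\<in>K. 0 < c k" and "inj_on c K"
    and "\<forall>x. C0 + C1 * x + (\<Sum>k\<in>K. al k * tanh (c k * x + e k) + (b k * x + f k) * dtanh (c k * x + e k)) = 0"
  shows "C0 = 0 \<and> C1 = 0 \<and> (\<forall>k\<in>K. al k = 0 \<and> b k = 0 \<and> f k = 0)"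
  using assms
proof (induction K rule: finite_ranking_induct[where f = "\<lambda>k. - c k"])
  case empty
  then have "C0 + C1 * x = 0" for x
    by simp
  from this[of 0] this[of 1] show ?case
    by simp
next
  case (insert k0 K)
  have fin: "finite (insert k0 K)" and least: "\<forall>k\<in>insert k0 K. c k0 \<le> c k"
    using insert.hyps by auto
  have "b k0 = 0 \<and> al k0 = 2 * f k0"
    by (rule tanh_sum_vanishing_least_slope[OF fin insert.prems(1,2) _ least insert.prems(3)]) simp
  \<comment> \<open>the substitution \<open>x \<mapsto> - x\<close> keeps the slopes and flips the sign of \<open>al\<close> and \<open>b\<close>\<close>
  moreover have "- b k0 = 0 \<and> - al k0 = 2 * f k0"
    by (rule tanh_sum_vanishing_least_slope[OF fin insert.prems(1,2) _ least
          tanh_sum_reflect[OF insert.prems(3)]]) simp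
  ultimately have "al k0 = 0" "b k0 = 0" "f k0 = 0"
    by linarith+
  then have drop_k0: "(\<Sum>k\<in>insert k0 K. al k * tanh (c k * x + e k) + (b k * x + f k) * dtanh (c k * x + e k))
      = (\<Sum>k\<in>K. al k * tanh (c k * x + e k) + (b k * x + f k) * dtanh (c k * x + e k))" for x
    by (simp add: sum.insert_if[OF insert.hyps(1)])
  have "\<forall>k\<in>K. 0 < c k" "inj_on c K"
    using insert.prems(1,2) by (auto intro: inj_on_subset)
  from insert.IH[OF this insert.prems(3)[unfolded drop_k0]] \<open>al k0 = 0\<close> \<open>b k0 = 0\<close> \<open>f k0 = 0\<close>
  show ?case
    by simp
qed

lemma tanh_ridge_sum_vanishing:
  fixes U :: "'a::real_inner set" and v ga :: 'a and al :: "'a \<Rightarrow> real" and be :: "'a \<Rightarrow> 'a"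
  assumes fin: "finite U" and pos: "\<forall>u\<in>U. 0 < u \<bullet> v" and inj: "inj_on (\<lambda>u. u \<bullet> v) U"
    and h: "\<forall>x. (\<Sum>u\<in>U. al u * tanh (u \<bullet> x) + dtanh (u \<bullet> x) * (be u \<bullet> x)) + ga \<bullet> x = 0"
  shows "ga = 0 \<and> (\<forall>u\<in>U. al u = 0 \<and> be u = 0)"
proof -
  have line: "ga \<bullet> y = 0 \<and> (\<forall>u\<in>U. al u = 0 \<and> be u \<bullet> y = 0)" for y
  proof -
    have "\<forall>r. ga \<bullet> y + (ga \<bullet> v) * r + (\<Sum>u\<in>U. al u * tanh ((u \<bullet> v) * r + u \<bullet> y)
      + ((be u \<bullet> v) * r + be u \<bullet> y) * dtanh ((u \<bullet> v) * r + u \<bullet> y)) = 0"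
    proof
      fix r
      have eq: "z \<bullet> (r *\<^sub>R v + y) = (z \<bullet> v) * r + z \<bullet> y" for z
        by (simp add: inner_add_right mult.commute)
      show "ga \<bullet> y + (ga \<bullet> v) * r + (\<Sum>u\<in>U. al u * tanh ((u \<bullet> v) * r + u \<bullet> y)
        + ((be u \<bullet> v) * r + be u \<bullet> y) * dtanh ((u \<bullet> v) * r + u \<bullet> y)) = 0"
        using h[rule_format, of "r *\<^sub>R v + y"] unfolding eq by (simp add: ac_simps)
    qed
    from tanh_sum_vanishing[where e = "\<lambda>u. u \<bullet> y" and b = "\<lambda>u. be u \<bullet> v"
        and f = "\<lambda>u. be u \<bullet> y", OF fin pos inj this] show ?thesis
      by simp
  qed
  have "ga = 0"
    using line[of ga] by simp
  moreover have "al u = 0 \<and> be u = 0" if "u \<in> U" for u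
  proof -
    have "al u = 0" "be u \<bullet> be u = 0"
      using line[of "be u"] that by blast+
    then show ?thesis
      by simp
  qed
  ultimately show ?thesis
    by blast
qed

lemma finite_imp_ex_inj_on_inner:
  fixes P :: "'a::euclidean_space set"
  assumes "finite P"
  shows "\<exists>v. inj_on (\<lambda>u. u \<bullet> v) P"
proof -
  define H where "H = (\<lambda>(u, u'). {v. (u - u') \<bullet> v = 0}) ` {(u, u') \<in> P \<times> P. u \<noteq> u'}"
  have "finite H"
    using assms unfolding H_def by (auto intro: finite_subset[of _ "P \<times> P"])
  then have "negligible (\<Union>H)"
    by (auto simp: H_def intro!: negligible_Union negligible_hyperplane)
  then obtain v where "v \<notin> \<Union>H"
    using non_negligible_UNIV by (metis UNIV_eq_I)
  then have "inj_on (\<lambda>u. u \<bullet> v) P"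
    by (auto simp: inj_on_def H_def inner_diff_left)
  then show ?thesis ..
qed

definition pos_rep :: "'a \<Rightarrow> 'a::real_inner \<Rightarrow> 'a" where
  "pos_rep v u = (if u \<bullet> v < 0 then - u else u)"

lemma pos_rep_pos: "u \<bullet> v \<noteq> 0 \<Longrightarrow> 0 < pos_rep v u \<bullet> v"
  by (simp add: pos_rep_def)

lemma pos_rep_0 [simp]: "pos_rep v 0 = 0"
  by (simp add: pos_rep_def)

lemma pos_rep_pair: "{pos_rep v u, - pos_rep v u} = {u, - u}"
  by (auto simp: pos_rep_def)

lemma card_Un_uminus_image:
  fixes U :: "'a::real_inner set"
  assumes "finite U" and "\<forall>u\<in>U. u \<bullet> v \<noteq> 0"
  shows "card (U \<union> uminus ` U) = 2 * card (pos_rep v ` U)"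
proof -
  let ?R = "pos_rep v ` U"
  have pos: "0 < r \<bullet> v" if "r \<in> ?R" for r
    using that assms(2) pos_rep_pos by blast
  have "U \<union> uminus ` U = (\<Union>u\<in>U. {u, - u})"
    by auto
  also have "\<dots> = (\<Union>u\<in>U. {pos_rep v u, - pos_rep v u})"
    by (simp add: pos_rep_pair)
  also have "\<dots> = ?R \<union> uminus ` ?R"
    by auto
  finally have "U \<union> uminus ` U = ?R \<union> uminus ` ?R" .
  moreover have "?R \<inter> uminus ` ?R = {}"
  proof (rule equals0I)
    fix r assume "r \<in> ?R \<inter> uminus ` ?R"
    then obtain r' where "r \<in> ?R" "r' \<in> ?R" "r = - r'"
      by blast
    then show False
      using pos[of r] pos[of r'] by (simp add: inner_minus_left)
  qed
  moreover have "card (uminus ` ?R) = card ?R"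
    by (simp add: card_image)
  ultimately show ?thesis
    using assms(1) by (simp add: card_Un_disjoint)
qed

text \<open>For \<open>u = 0\<close> the features \<open>Inr (u, t)\<close> are the coordinate functions \<open>x\<^sub>t\<close>.\<close>

fun tanh_feature :: "(real ^ 'n) + ((real ^ 'n) \<times> 'n) \<Rightarrow> real ^ 'n \<Rightarrow> real" where
  "tanh_feature (Inl u) x = tanh (u \<bullet> x)"
| "tanh_feature (Inr (u, t)) x = dtanh (u \<bullet> x) * x $ t"

lemma tanh_feature_Inr: "tanh_feature (Inr p) x = dtanh (fst p \<bullet> x) * x $ snd p"
  by (cases p) simp

lemma tanh_features_independent:
  fixes W A :: "(real ^ 'n) set" and v :: "real ^ 'n" and c :: "(real ^ 'n) + ((real ^ 'n) \<times> 'n) \<Rightarrow> real"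
  assumes fin: "finite W" and A: "A \<subseteq> insert 0 W" and pos: "\<forall>u\<in>W. 0 < u \<bullet> v"
    and inj: "inj_on (\<lambda>u. u \<bullet> v) W"
    and h: "\<forall>x. (\<Sum>i\<in>Inl ` W \<union> Inr ` (A \<times> UNIV). c i * tanh_feature i x) = 0"
  shows "\<forall>i\<in>Inl ` W \<union> Inr ` (A \<times> UNIV). c i = 0"
proof -
  define al where "al u = c (Inl u)" for u
  define be where "be u = (\<chi> t. if u \<in> A then c (Inr (u, t)) else 0)" for u
  have be_outside: "be u = 0" if "u \<notin> A" for u
    using that by (simp add: be_def zero_vec_def)
  have "finite A" "0 \<notin> W"
    using A fin pos finite_subset by fastforce+
  have decompose: "(\<Sum>i\<in>Inl ` W \<union> Inr ` (A \<times> UNIV). c i * tanh_feature i x)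
      = (\<Sum>u\<in>W. al u * tanh (u \<bullet> x) + dtanh (u \<bullet> x) * (be u \<bullet> x)) + be 0 \<bullet> x" for x
  proof -
    have "(\<Sum>i\<in>Inl ` W \<union> Inr ` (A \<times> UNIV). c i * tanh_feature i x)
        = (\<Sum>u\<in>W. al u * tanh (u \<bullet> x)) + (\<Sum>u\<in>A. \<Sum>t\<in>UNIV. c (Inr (u, t)) * (dtanh (u \<bullet> x) * x $ t))"
      using fin \<open>finite A\<close>
      by (subst sum.union_disjoint) (auto simp: sum.reindex sum.cartesian_product al_def split_beta tanh_feature_Inr)
    also have "(\<Sum>u\<in>A. \<Sum>t\<in>UNIV. c (Inr (u, t)) * (dtanh (u \<bullet> x) * x $ t))
        = (\<Sum>u\<in>A. dtanh (u \<bullet> x) * (be u \<bullet> x))"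
      by (rule sum.cong[OF refl]) (simp add: be_def inner_vec_def sum_distrib_left mult_ac)
    also have "\<dots> = (\<Sum>u\<in>insert 0 W. dtanh (u \<bullet> x) * (be u \<bullet> x))"
      using A fin be_outside by (intro sum.mono_neutral_left) auto
    finally show ?thesis
      using fin \<open>0 \<notin> W\<close> by (simp add: sum.distrib)
  qed
  have "\<forall>x. (\<Sum>u\<in>W. al u * tanh (u \<bullet> x) + dtanh (u \<bullet> x) * (be u \<bullet> x)) + be 0 \<bullet> x = 0"
    using h unfolding decompose .
  then have vanish: "be 0 = 0 \<and> (\<forall>u\<in>W. al u = 0 \<and> be u = 0)"
    by (rule tanh_ridge_sum_vanishing[where al = al and be = be and ga = "be 0", OF fin pos inj])
  show ?thesis
  proof
    fix i assume "i \<in> Inl ` W \<union> Inr ` (A \<times> (UNIV :: 'n set))"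
    then consider (Inl) u where "u \<in> W" "i = Inl u" | (Inr) u t where "u \<in> A" "i = Inr (u, t)"
      by blast
    then show "c i = 0"
    proof cases
      case Inl
      with vanish show ?thesis
        by (simp add: al_def)
    next
      case Inr
      then have "be u $ t = c i"
        by (simp add: be_def)
      moreover have "be u = 0"
        using vanish Inr A by auto
      ultimately show ?thesis
        by simp
    qed
  qed
qed

lemma sum_fun_apply: "(\<Sum>i\<in>I. f i) x = (\<Sum>i\<in>I. f i x)"
  by (induction I rule: infinite_finite_induct) auto

lemma module_fscale: "module (fscale :: real \<Rightarrow> ('a \<Rightarrow> real) \<Rightarrow> _)"
  using vector_space_fscale module_iff_vector_space by blast

lemma fscale_in_fun_span: "f \<in> S \<Longrightarrow> fscale c f \<in> fun_span S"
  by (intro module.span_scale[OF module_fscale] module.span_base[OF module_fscale])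

lemma fun_dim_span_image_eq_card:
  fixes \<phi> :: "'i \<Rightarrow> 'a \<Rightarrow> real"
  assumes fin: "finite I" and indep: "\<And>c. \<forall>x. (\<Sum>i\<in>I. c i * \<phi> i x) = 0 \<Longrightarrow> \<forall>i\<in>I. c i = 0"
  shows "fun_dim (fun_span (\<phi> ` I)) = card I"
proof -
  have inj: "inj_on \<phi> I"
  proof (rule inj_onI, rule ccontr)
    fix i j assume ij: "i \<in> I" "j \<in> I" "\<phi> i = \<phi> j" "i \<noteq> j"
    define c where "c k = (if k = i then 1 else if k = j then -1 else 0 :: real)" for k
    have "c k * \<phi> k x = (if k = i then \<phi> i x else 0) + (if k = j then - \<phi> j x else 0)" for k x
      using ij by (simp add: c_def)
    then have "(\<Sum>k\<in>I. c k * \<phi> k x) = 0" for x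
      using ij fin by (simp add: sum.distrib)
    then have "c i = 0"
      using indep ij by blast
    then show False
      by (simp add: c_def)
  qed
  have "\<not> module.dependent fscale (\<phi> ` I)"
  proof
    assume "module.dependent fscale (\<phi> ` I)"
    then obtain u where u: "\<exists>f\<in>\<phi> ` I. u f \<noteq> 0" "(\<Sum>f\<in>\<phi> ` I. fscale (u f) f) = 0"
      using module.dependent_finite[OF module_fscale] fin by blast
    then have "\<forall>x. (\<Sum>i\<in>I. u (\<phi> i) * \<phi> i x) = 0"
      using inj by (auto simp: sum.reindex fun_eq_iff sum_fun_apply fscale_def)
    then have "\<forall>i\<in>I. u (\<phi> i) = 0"
      by (rule indep)
    with u(1) show False
      by blast
  qed
  then have "fun_dim (fun_span (\<phi> ` I)) = card (\<phi> ` I)"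
    by (rule vector_space.dim_span_eq_card_independent[OF vector_space_fscale])
  with card_image[OF inj] show ?thesis
    by simp
qed

lemma tanh_neuron_eq_fscale:
  "(\<lambda>x. tanh (w \<bullet> x)) = fscale (if w \<bullet> v < 0 then -1 else 1) (tanh_feature (Inl (pos_rep v w)))"
  by (simp add: fun_eq_iff fscale_def pos_rep_def inner_minus_left)

lemma tanh_feature_Inl_eq_fscale:
  "tanh_feature (Inl (pos_rep v w)) = fscale (if w \<bullet> v < 0 then -1 else 1) (\<lambda>x. tanh (w \<bullet> x))"
  by (simp add: fun_eq_iff fscale_def pos_rep_def inner_minus_left)

lemma dtanh_neuron_eq_fscale:
  "(\<lambda>x. a * deriv tanh (w \<bullet> x) * x $ t) = fscale a (tanh_feature (Inr (pos_rep v w, t)))"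
  by (cases "w \<bullet> v < 0") (simp_all add: fun_eq_iff fscale_def pos_rep_def deriv_tanh_eq_dtanh inner_minus_left)

lemma tanh_feature_Inr_eq_fscale:
  "a \<noteq> 0 \<Longrightarrow> tanh_feature (Inr (pos_rep v w, t)) = fscale (1 / a) (\<lambda>x. a * deriv tanh (w \<bullet> x) * x $ t)"
  by (cases "w \<bullet> v < 0") (simp_all add: fun_eq_iff fscale_def pos_rep_def deriv_tanh_eq_dtanh inner_minus_left)

lemma tanh_network_span_eq_feature_span:
  fixes w :: "nat \<Rightarrow> real ^ 'n" and a :: "nat \<Rightarrow> real" and v :: "real ^ 'n"
  shows "fun_span ({(\<lambda>x. tanh (w i \<bullet> x)) | i. i < m} \<union> {(\<lambda>x. a i * deriv tanh (w i \<bullet> x) * x $ t) | i t. i < m})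
    = fun_span (tanh_feature ` (Inl ` pos_rep v ` w ` {i. i < m \<and> w i \<noteq> 0}
        \<union> Inr ` (pos_rep v ` w ` {i. i < m \<and> a i \<noteq> 0} \<times> UNIV)))"
    (is "fun_span ?S = fun_span (tanh_feature ` ?I)")
proof -
  have zero: "(0 :: real ^ 'n \<Rightarrow> real) \<in> fun_span T" for T
    by (rule module.span_zero[OF module_fscale])
  have "?S \<subseteq> fun_span (tanh_feature ` ?I)"
  proof
    fix g assume "g \<in> ?S"
    then consider (tanh_gen) i where "i < m" "g = (\<lambda>x. tanh (w i \<bullet> x))"
      | (dtanh_gen) i t where "i < m" "g = (\<lambda>x. a i * deriv tanh (w i \<bullet> x) * x $ t)"
      by blast
    then show "g \<in> fun_span (tanh_feature ` ?I)"
    proof cases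
      case tanh_gen
      show ?thesis
      proof (cases "w i = 0")
        case True
        then have "g = 0"
          using tanh_gen by (simp add: fun_eq_iff)
        then show ?thesis
          using zero by simp
      next
        case False
        then have "Inl (pos_rep v (w i)) \<in> ?I"
          using tanh_gen by blast
        then show ?thesis
          unfolding tanh_gen(2) tanh_neuron_eq_fscale[where v = v] by (intro fscale_in_fun_span imageI)
      qed
    next
      case dtanh_gen
      show ?thesis
      proof (cases "a i = 0")
        case True
        then have "g = 0"
          using dtanh_gen by (simp add: fun_eq_iff)
        then show ?thesis
          using zero by simp
      next
        case False
        then have "Inr (pos_rep v (w i), t) \<in> ?I"
          using dtanh_gen by blast
        then show ?thesis
          unfolding dtanh_gen(2) dtanh_neuron_eq_fscale[where v = v] by (intro fscale_in_fun_span imageI)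
      qed
    qed
  qed
  moreover have "tanh_feature ` ?I \<subseteq> fun_span ?S"
  proof
    fix g assume "g \<in> tanh_feature ` ?I"
    then consider (tanh_gen) i where "i < m" "g = tanh_feature (Inl (pos_rep v (w i)))"
      | (dtanh_gen) i t where "i < m" "a i \<noteq> 0" "g = tanh_feature (Inr (pos_rep v (w i), t))"
      by blast
    then show "g \<in> fun_span ?S"
    proof cases
      case tanh_gen
      have "(\<lambda>x. tanh (w i \<bullet> x)) \<in> ?S"
        using tanh_gen(1) by (intro UnI1 CollectI exI[of _ i] conjI refl)
      then show ?thesis
        unfolding tanh_gen(2) tanh_feature_Inl_eq_fscale by (rule fscale_in_fun_span)
    next
      case dtanh_gen
      have "(\<lambda>x. a i * deriv tanh (w i \<bullet> x) * x $ t) \<in> ?S"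
        using dtanh_gen(1) by (intro UnI2 CollectI exI[of _ i] exI[of _ t] conjI refl)
      then show ?thesis
        unfolding dtanh_gen(3) by (subst tanh_feature_Inr_eq_fscale[OF dtanh_gen(2)]) (rule fscale_in_fun_span)
    qed
  qed
  ultimately show ?thesis
    unfolding module.span_eq[OF module_fscale] ..
qed

lemma tanh_network_dim:
  fixes m :: nat and w :: "nat \<Rightarrow> real ^ 'n" and a :: "nat \<Rightarrow> real" and v :: "real ^ 'n"
  defines "W \<equiv> pos_rep v ` w ` {i. i < m \<and> w i \<noteq> 0}" and "A \<equiv> pos_rep v ` w ` {i. i < m \<and> a i \<noteq> 0}"
  assumes nz: "\<forall>i<m. w i \<noteq> 0 \<longrightarrow> w i \<bullet> v \<noteq> 0" and inj: "inj_on (\<lambda>u. u \<bullet> v) W"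
  shows "fun_dim (fun_span ({(\<lambda>x. tanh (w i \<bullet> x)) | i. i < m} \<union>
      {(\<lambda>x. a i * deriv tanh (w i \<bullet> x) * x $ t) | i t. i < m})) = card W + card A * CARD('n)"
proof -
  let ?I = "Inl ` W \<union> Inr ` (A \<times> (UNIV :: 'n set))"
  have fin: "finite W" "finite A"
    by (simp_all add: W_def A_def)
  have "A \<subseteq> insert 0 W"
  proof
    fix u assume "u \<in> A"
    then obtain i where "i < m" "u = pos_rep v (w i)"
      by (auto simp: A_def)
    then show "u \<in> insert 0 W"
      by (cases "w i = 0") (auto simp: W_def)
  qed
  moreover have "\<forall>u\<in>W. 0 < u \<bullet> v"
    using nz by (auto simp: W_def pos_rep_pos)
  ultimately have "fun_dim (fun_span (tanh_feature ` ?I)) = card ?I"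
    using fin by (intro fun_dim_span_image_eq_card tanh_features_independent[OF fin(1) _ _ inj]) auto
  also have "card ?I = card W + card A * CARD('n)"
    using fin by (subst card_Un_disjoint) (auto simp: card_image card_cartesian_product)
  finally show ?thesis
    unfolding tanh_network_span_eq_feature_span[where v = v] W_def A_def .
qed

lemma card_pos_rep_image:
  fixes w :: "nat \<Rightarrow> 'a::real_inner" and P :: "nat \<Rightarrow> bool"
  assumes nz: "\<forall>i<m. w i \<noteq> 0 \<longrightarrow> w i \<bullet> v \<noteq> 0"
  shows "real (card (pos_rep v ` w ` {i. i < m \<and> P i}))
    = real (card {u. \<exists>i<m. w i \<noteq> 0 \<and> P i \<and> (u = w i \<or> u = - w i)}) / 2
      + real (card {u. \<exists>i<m. w i = 0 \<and> P i \<and> u = w i})"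
proof -
  let ?U = "w ` {i. i < m \<and> w i \<noteq> 0 \<and> P i}" and ?Z = "{u. \<exists>i<m. w i = 0 \<and> P i \<and> u = w i}"
  have "{u. \<exists>i<m. w i \<noteq> 0 \<and> P i \<and> (u = w i \<or> u = - w i)} = ?U \<union> uminus ` ?U"
    by auto
  then have "card {u. \<exists>i<m. w i \<noteq> 0 \<and> P i \<and> (u = w i \<or> u = - w i)} = 2 * card (pos_rep v ` ?U)"
    using nz by (simp add: card_Un_uminus_image)
  moreover have "pos_rep v ` w ` {i. i < m \<and> P i} = pos_rep v ` ?U \<union> ?Z"
  proof (rule equalityI; rule subsetI)
    fix u assume "u \<in> pos_rep v ` w ` {i. i < m \<and> P i}"
    then obtain i where "i < m" "P i" "u = pos_rep v (w i)"
      by auto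
    then show "u \<in> pos_rep v ` ?U \<union> ?Z"
      by (cases "w i = 0") auto
  next
    fix u assume "u \<in> pos_rep v ` ?U \<union> ?Z"
    then consider "u \<in> pos_rep v ` ?U" | i where "i < m" "P i" "w i = 0" "u = w i"
      by blast
    then show "u \<in> pos_rep v ` w ` {i. i < m \<and> P i}"
    proof cases
      case (2 i)
      then have "u = pos_rep v (w i)"
        by simp
      with 2 show ?thesis
        by blast
    qed blast
  qed
  moreover have "pos_rep v ` ?U \<inter> ?Z = {}"
    using nz pos_rep_pos by fastforce
  moreover have "finite ?Z"
    by (rule finite_subset[of _ "{0}"]) auto
  ultimately show ?thesis
    by (simp add: card_Un_disjoint)
qed

theorem mainTheorem14:
  fixes m :: nat
    and w :: "nat \<Rightarrow> real ^ 'n"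
    and a :: "nat \<Rightarrow> real"
  shows "real (fun_dim (fun_span
            ({(\<lambda>x::real ^ 'n. tanh (w i \<bullet> x)) | i. i < m} \<union>
             {(\<lambda>x::real ^ 'n. a i * deriv tanh (w i \<bullet> x) * x $ t) | i t. i < m})))
       = real (card {v. \<exists>i<m. w i \<noteq> 0 \<and> (v = w i \<or> v = - w i)}) / 2
         + (real (card {v. \<exists>i<m. w i \<noteq> 0 \<and> a i \<noteq> 0 \<and> (v = w i \<or> v = - w i)}) / 2
            + real (card {v. \<exists>i<m. w i = 0 \<and> a i \<noteq> 0 \<and> v = w i})) * real CARD('n)"
proof -
  let ?V = "{v. \<exists>i<m. w i \<noteq> 0 \<and> (v = w i \<or> v = - w i)}"
  have "finite (insert 0 ?V)"
    by (rule finite_subset[of _ "insert 0 (w ` {..<m} \<union> uminus ` w ` {..<m})"]) auto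
  then obtain v where inj: "inj_on (\<lambda>u. u \<bullet> v) (insert 0 ?V)"
    using finite_imp_ex_inj_on_inner by blast
  have nz: "\<forall>i<m. w i \<noteq> 0 \<longrightarrow> w i \<bullet> v \<noteq> 0"
    using inj_onD[OF inj, of _ 0] by auto
  have "inj_on (\<lambda>u. u \<bullet> v) (pos_rep v ` w ` {i. i < m \<and> w i \<noteq> 0})"
    by (rule inj_on_subset[OF inj]) (auto simp: pos_rep_def)
  from tanh_network_dim[OF nz this, of a] show ?thesis
    using card_pos_rep_image[OF nz, of "\<lambda>i. w i \<noteq> 0"] card_pos_rep_image[OF nz, of "\<lambda>i. a i \<noteq> 0"]
    by simp
qed

end
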